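(* Let $\Gamma$ be a $d\times k$ categorical random matrix and $\mathbf U=(U_1,\dots,U_k)^\top$ a vector of iid standard uniform random variables independent of $\Gamma$. Then $\mathbf X=\Gamma\mathbf U$ has positive regression dependence (PRD).
   Context: A $d\times k$ categorical random matrix is a random matrix with entries in $\{0,1\}$ each of whose rows sums to $1$. A set $A\subseteq\mathbb R^d$ is increasing if $\mathbf x\in A$ and $\mathbf y\ge\mathbf x$ (componentwise) imply $\mathbf y\in A$. $\mathbf X=(X_1,\dots,X_d)$ has PRD if for every $i\in[d]$ and every increasing set $A\subseteq\mathbb R^d$, the function $x\mapsto\mathbb P(\mathbf X\in A\mid X_i=x)$ is increasing. *)

theory Defs
  imports "HOL-Probability.Probability"
begin

definition categorical_matrix :: "real^'k^'d \<Rightarrow> bool" where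
  "categorical_matrix G \<longleftrightarrow>
     (\<forall>i j. G $ i $ j \<in> {0, 1}) \<and> (\<forall>i. (\<Sum>j\<in>UNIV. G $ i $ j) = 1)"

definition increasing_set :: "(real^'d) set \<Rightarrow> bool" where
  "increasing_set A \<longleftrightarrow> (\<forall>x y. x \<in> A \<and> (\<forall>i. x $ i \<le> y $ i) \<longrightarrow> y \<in> A)"

text \<open>Positive regression dependence: for every coordinate i and every (Borel)
  increasing set A, the conditional probability P(X \<in> A | X_i = x) admits an
  increasing version, i.e. a Borel function g of x with
  P(X \<in> A, X_i \<in> B) = \<integral>_B g dP_{X_i} for all Borel B.\<close>
definition PRD :: "'a measure \<Rightarrow> ('a \<Rightarrow> real^'d) \<Rightarrow> bool" where
  "PRD M X \<longleftrightarrow>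
     (\<forall>i. \<forall>A \<in> sets borel. increasing_set A \<longrightarrow>
        (\<exists>g :: real \<Rightarrow> real. mono g \<and> g \<in> borel_measurable borel \<and>
           (\<forall>x. 0 \<le> g x \<and> g x \<le> 1) \<and>
           (\<forall>B \<in> sets borel.
              measure M {\<omega> \<in> space M. X \<omega> \<in> A \<and> X \<omega> $ i \<in> B} =
              (\<integral>x. indicator B x * g x \<partial>(distr M borel (\<lambda>\<omega>. X \<omega> $ i))))))"

end

theory Submission
  imports Defs
begin

text \<open>
  Row \<open>i\<close> of a categorical matrix \<open>G\<close> selects one coordinate \<open>c\<close> of \<open>U\<close>, so given \<open>\<Gamma> = G\<close> we
  have \<open>X\<^sub>i = U\<^sub>c\<close>. Since \<open>U\<^sub>c\<close> is independent of the other coordinates, conditioning further on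
  \<open>X\<^sub>i = x\<close> amounts to replacing \<open>U\<^sub>c\<close> by \<open>x\<close>; the probability that \<open>G U\<close> then lies in an
  increasing set \<open>A\<close> is increasing in \<open>x\<close> because \<open>G\<close> has nonnegative entries. Mixing over the
  finitely many values of \<open>\<Gamma>\<close>, which is independent of \<open>U\<close>, with weights \<open>P(\<Gamma> = G)\<close> gives an
  increasing version of \<open>P(X \<in> A | X\<^sub>i = x)\<close>; and \<open>X\<^sub>i\<close> has the common law of the \<open>U\<^sub>j\<close>.
\<close>

definition vec_upd :: "'a^'n \<Rightarrow> 'n \<Rightarrow> 'a \<Rightarrow> 'a^'n" where
  "vec_upd u c x = (\<chi> j. if j = c then x else u $ j)"

lemma vec_upd_nth [simp]: "vec_upd u c x $ j = (if j = c then x else u $ j)"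
  by (simp add: vec_upd_def)

lemma vec_upd_vec_upd [simp]: "vec_upd (vec_upd u c y) c x = vec_upd u c x"
  by (simp add: vec_eq_iff)

lemma vec_upd_nth_self [simp]: "vec_upd u c (u $ c) = u"
  by (simp add: vec_eq_iff)

lemma borel_measurable_vec_nth [measurable (raw)]:
  fixes f :: "'a \<Rightarrow> 'b::topological_space^'n"
  assumes "f \<in> borel_measurable M"
  shows "(\<lambda>x. f x $ i) \<in> borel_measurable M"
proof -
  have "(\<lambda>v :: 'b^'n. v $ i) \<in> borel_measurable borel"
    by (intro borel_measurable_continuous_onI continuous_on_component continuous_on_id)
  with assms show ?thesis
    by (rule measurable_compose)
qed

lemma borel_measurable_vec_lambda [measurable]:
  fixes f :: "'a \<Rightarrow> 'n::finite \<Rightarrow> real"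
  assumes "\<And>j. (\<lambda>x. f x j) \<in> borel_measurable M"
  shows "(\<lambda>x. \<chi> j. f x j) \<in> borel_measurable M"
  using assms
  by (auto simp: borel_measurable_euclidean_space[where f="\<lambda>x. \<chi> j. f x j"] Basis_vec_def inner_axis)

lemma borel_measurable_vec_upd [measurable (raw)]:
  fixes f :: "'a \<Rightarrow> real^'n" and g :: "'a \<Rightarrow> real"
  assumes "f \<in> borel_measurable M" and "g \<in> borel_measurable M"
  shows "(\<lambda>x. vec_upd (f x) c (g x)) \<in> borel_measurable M"
  unfolding vec_upd_def using assms by measurable

lemma borel_measurable_matrix_vector_mult [measurable (raw)]:
  fixes f :: "'a \<Rightarrow> real^'k^'d" and g :: "'a \<Rightarrow> real^'k"
  assumes "f \<in> borel_measurable M" and "g \<in> borel_measurable M"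
  shows "(\<lambda>x. f x *v g x) \<in> borel_measurable M"
  unfolding matrix_vector_mult_def using assms by measurable

lemma (in prob_space) emeasure_indep_var_pair:
  assumes "indep_var N X N Y" and "S \<in> sets (N \<Otimes>\<^sub>M N)"
  shows "emeasure M {\<omega> \<in> space M. (X \<omega>, Y \<omega>) \<in> S} =
    (\<integral>\<^sup>+x. emeasure M {\<omega> \<in> space M. (x, Y \<omega>) \<in> S} \<partial>distr M N X)"
proof -
  have X: "random_variable N X" and Y: "random_variable N Y"
    and joint: "distr M N X \<Otimes>\<^sub>M distr M N Y = distr M (N \<Otimes>\<^sub>M N) (\<lambda>\<omega>. (X \<omega>, Y \<omega>))"
    using assms(1) unfolding indep_var_distribution_eq by auto
  interpret Y: prob_space "distr M N Y" by (rule prob_space_distr[OF Y])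
  have "emeasure M {\<omega> \<in> space M. (X \<omega>, Y \<omega>) \<in> S} =
      emeasure (distr M (N \<Otimes>\<^sub>M N) (\<lambda>\<omega>. (X \<omega>, Y \<omega>))) S"
    using X Y assms(2) by (simp add: emeasure_distr vimage_def Int_def conj_commute)
  also have "\<dots> = emeasure (distr M N X \<Otimes>\<^sub>M distr M N Y) S"
    by (simp add: joint)
  also have "\<dots> = (\<integral>\<^sup>+x. emeasure (distr M N Y) (Pair x -` S) \<partial>distr M N X)"
    using assms(2) by (intro Y.emeasure_pair_measure_alt) simp
  also have "\<dots> = (\<integral>\<^sup>+x. emeasure M {\<omega> \<in> space M. (x, Y \<omega>) \<in> S} \<partial>distr M N X)"
  proof (rule nn_integral_cong)
    fix x assume "x \<in> space (distr M N X)"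
    then have "Pair x -` S \<in> sets N"
      using assms(2) by (simp add: sets_Pair1)
    with Y show "emeasure (distr M N Y) (Pair x -` S) = emeasure M {\<omega> \<in> space M. (x, Y \<omega>) \<in> S}"
      by (simp add: emeasure_distr vimage_def Int_def conj_commute)
  qed
  finally show ?thesis .
qed

lemma (in prob_space) borel_measurable_emeasure_section:
  assumes "random_variable N Y" and "S \<in> sets (N \<Otimes>\<^sub>M N)"
  shows "(\<lambda>x. emeasure M {\<omega> \<in> space M. (x, Y \<omega>) \<in> S}) \<in> borel_measurable N"
proof -
  interpret Y: prob_space "distr M N Y" by (rule prob_space_distr[OF assms(1)])
  have "emeasure M {\<omega> \<in> space M. (x, Y \<omega>) \<in> S} = emeasure (distr M N Y) (Pair x -` S)"
    if "x \<in> space N" for x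
  proof -
    have "Pair x -` S \<in> sets N"
      using assms(2) by (rule sets_Pair1)
    with assms(1) show ?thesis
      by (simp add: emeasure_distr vimage_def Int_def conj_commute)
  qed
  with Y.measurable_emeasure_Pair[of S] assms(2) show ?thesis
    by (simp cong: measurable_cong)
qed

lemma (in prob_space) random_variable_indep_coordinates:
  fixes U :: "'a \<Rightarrow> real^'n"
  assumes "indep_vars (\<lambda>_. borel) (\<lambda>j \<omega>. U \<omega> $ j) UNIV"
  shows "random_variable borel U"
proof -
  have "random_variable borel (\<lambda>\<omega>. U \<omega> $ j)" for j
    using assms by (auto simp: indep_vars_def)
  then have "random_variable borel (\<lambda>\<omega>. \<chi> j. U \<omega> $ j)"
    by (rule borel_measurable_vec_lambda)
  then show ?thesis
    by (simp only: vec_lambda_eta)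
qed

text \<open>\<open>indep_var\<close> requires both variables to take values in the same space, so \<open>U\<^sub>c\<close> is
  embedded into \<open>real^'n\<close>.\<close>

lemma (in prob_space) indep_var_vec_upd_split:
  fixes U :: "'a \<Rightarrow> real^'n"
  assumes "indep_vars (\<lambda>_. borel) (\<lambda>j \<omega>. U \<omega> $ j) UNIV"
  shows "indep_var borel (\<lambda>\<omega>. vec_upd 0 c (U \<omega> $ c)) borel (\<lambda>\<omega>. vec_upd (U \<omega>) c 0)"
proof -
  have "indep_var (PiM {c} (\<lambda>_. borel)) (\<lambda>\<omega>. restrict (\<lambda>j. U \<omega> $ j) {c})
      (PiM (- {c}) (\<lambda>_. borel)) (\<lambda>\<omega>. restrict (\<lambda>j. U \<omega> $ j) (- {c}))"
    by (rule indep_var_restrict[OF assms]) auto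
  moreover have "(\<lambda>f. vec_upd 0 c (f c)) \<in> borel_measurable (PiM {c} (\<lambda>_. borel :: real measure))"
    by measurable
  moreover have "(\<lambda>f. \<chi> j. if j = c then 0 else f j) \<in> borel_measurable (PiM (- {c}) (\<lambda>_. borel :: real measure))"
  proof (rule borel_measurable_vec_lambda)
    show "(\<lambda>f. if j = c then 0 else f j) \<in> borel_measurable (PiM (- {c}) (\<lambda>_. borel))" for j
      by (cases "j = c") (simp_all add: measurable_component_singleton)
  qed
  ultimately have "indep_var borel ((\<lambda>f. vec_upd 0 c (f c)) \<circ> (\<lambda>\<omega>. restrict (\<lambda>j. U \<omega> $ j) {c}))
      borel ((\<lambda>f. \<chi> j. if j = c then 0 else f j) \<circ> (\<lambda>\<omega>. restrict (\<lambda>j. U \<omega> $ j) (- {c})))"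
    by (rule indep_var_compose)
  moreover have "(\<lambda>f. \<chi> j. if j = c then 0 else f j) \<circ> (\<lambda>\<omega>. restrict (\<lambda>j. U \<omega> $ j) (- {c})) =
      (\<lambda>\<omega>. vec_upd (U \<omega>) c 0)"
    by (simp add: fun_eq_iff vec_eq_iff)
  ultimately show ?thesis
    by (simp add: comp_def)
qed

lemma (in prob_space) emeasure_indep_coordinates:
  fixes U :: "'a \<Rightarrow> real^'n"
  assumes indep: "indep_vars (\<lambda>_. borel) (\<lambda>j \<omega>. U \<omega> $ j) UNIV"
    and A: "A \<in> sets borel" and B: "B \<in> sets borel"
  shows "emeasure M {\<omega> \<in> space M. U \<omega> \<in> A \<and> U \<omega> $ c \<in> B} =
    (\<integral>\<^sup>+x. indicator B x * emeasure M {\<omega> \<in> space M. vec_upd (U \<omega>) c x \<in> A}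
      \<partial>distr M borel (\<lambda>\<omega>. U \<omega> $ c))"
proof -
  have U[measurable]: "random_variable borel U"
    using indep by (rule random_variable_indep_coordinates)
  define V where "V \<omega> = vec_upd 0 c (U \<omega> $ c)" for \<omega>
  define W where "W \<omega> = vec_upd (U \<omega>) c 0" for \<omega>
  define S where "S = {p. vec_upd (snd p) c (fst p $ c) \<in> A \<and> fst p $ c \<in> B}"
  define F where "F x = indicator B x * emeasure M {\<omega> \<in> space M. vec_upd (U \<omega>) c x \<in> A}" for x
  have S: "S \<in> sets (borel \<Otimes>\<^sub>M borel)"
  proof -
    have "S = {p \<in> space (borel \<Otimes>\<^sub>M borel). vec_upd (snd p) c (fst p $ c) \<in> A \<and> fst p $ c \<in> B}"
      by (simp add: S_def space_pair_measure)
    also have "\<dots> \<in> sets (borel \<Otimes>\<^sub>M borel)"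
      using A B by measurable
    finally show ?thesis .
  qed
  have W: "random_variable borel W"
    unfolding W_def by measurable
  have slice: "emeasure M {\<omega> \<in> space M. (v, W \<omega>) \<in> S} = F (v $ c)" for v
    by (cases "v $ c \<in> B") (simp_all add: S_def W_def F_def)
  have F: "(\<lambda>v. F (v $ c)) \<in> borel_measurable borel"
    using borel_measurable_emeasure_section[OF W S] by (simp add: slice)
  have "emeasure M {\<omega> \<in> space M. U \<omega> \<in> A \<and> U \<omega> $ c \<in> B} =
      emeasure M {\<omega> \<in> space M. (V \<omega>, W \<omega>) \<in> S}"
    by (simp add: S_def V_def W_def)
  also have "\<dots> = (\<integral>\<^sup>+v. emeasure M {\<omega> \<in> space M. (v, W \<omega>) \<in> S} \<partial>distr M borel V)"
    using indep_var_vec_upd_split[OF indep] unfolding V_def W_def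
    by (rule emeasure_indep_var_pair[OF _ S])
  also have "\<dots> = (\<integral>\<^sup>+v. F (v $ c) \<partial>distr M borel V)"
    by (simp add: slice)
  also have "distr M borel V = distr (distr M borel (\<lambda>\<omega>. U \<omega> $ c)) borel (vec_upd 0 c)"
    by (subst distr_distr) (simp_all add: V_def[abs_def] comp_def)
  also have "(\<integral>\<^sup>+v. F (v $ c) \<partial>\<dots>) = (\<integral>\<^sup>+x. F x \<partial>distr M borel (\<lambda>\<omega>. U \<omega> $ c))"
    using F by (subst nn_integral_distr) simp_all
  finally show ?thesis
    by (simp add: F_def)
qed

definition categorical_column :: "real^'k^'d \<Rightarrow> 'd \<Rightarrow> 'k" where
  "categorical_column G i = (SOME j. G $ i $ j = 1)"

lemma categorical_matrix_entry:
  assumes "categorical_matrix G"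
  shows "G $ i $ j = of_bool (j = categorical_column G i)"
proof -
  define S where "S = {j. G $ i $ j = 1}"
  have entry: "G $ i $ l = of_bool (l \<in> S)" for l
    using assms by (auto simp: categorical_matrix_def S_def)
  have "(\<Sum>l\<in>UNIV. of_bool (l \<in> S)) = (1::real)"
    using assms by (simp add: categorical_matrix_def flip: entry)
  then have "card S = 1"
    by simp
  then obtain c where S: "S = {c}"
    by (rule card_1_singletonE)
  then have "G $ i $ l = 1 \<longleftrightarrow> l = c" for l
    by (auto simp: S_def)
  then have "categorical_column G i = c"
    by (simp add: categorical_column_def)
  with S show ?thesis
    by (simp add: entry)
qed

lemma categorical_matrix_mult_vec_nth:
  assumes "categorical_matrix G"
  shows "(G *v u) $ i = u $ categorical_column G i"
  using assms by (simp add: matrix_vector_mult_def categorical_matrix_entry)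

lemma categorical_matrix_eq:
  assumes "categorical_matrix G"
  shows "G = (\<chi> i j. of_bool (j = categorical_column G i))"
  using assms by (simp add: vec_eq_iff categorical_matrix_entry)

lemma finite_categorical_matrices: "finite {G :: real^'k^'d. categorical_matrix G}"
proof (rule finite_subset)
  show "{G :: real^'k^'d. categorical_matrix G} \<subseteq> range (\<lambda>f. \<chi> i j. of_bool (j = f i))"
    using categorical_matrix_eq by blast
qed simp

lemma categorical_matrix_mult_vec_mono:
  assumes "categorical_matrix G" and "\<And>j. v $ j \<le> w $ j"
  shows "(G *v v) $ i \<le> (G *v w) $ i"
  using assms by (simp add: categorical_matrix_mult_vec_nth)

locale categorical_model = prob_space M for M :: "'a measure" +
  fixes Gamma :: "'a \<Rightarrow> real^'k^'d" and U :: "'a \<Rightarrow> real^'k" and law :: "real measure"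
  assumes Gamma_measurable [measurable]: "Gamma \<in> borel_measurable M"
    and categorical: "\<And>\<omega>. \<omega> \<in> space M \<Longrightarrow> categorical_matrix (Gamma \<omega>)"
    and indep_coordinates: "indep_vars (\<lambda>_. borel) (\<lambda>j \<omega>. U \<omega> $ j) UNIV"
    and distr_coordinate: "\<And>j. distr M borel (\<lambda>\<omega>. U \<omega> $ j) = law"
    and indep_Gamma_U: "\<And>S T. S \<in> sets borel \<Longrightarrow> T \<in> sets borel \<Longrightarrow>
      prob {\<omega> \<in> space M. Gamma \<omega> \<in> S \<and> U \<omega> \<in> T} =
      prob {\<omega> \<in> space M. Gamma \<omega> \<in> S} * prob {\<omega> \<in> space M. U \<omega> \<in> T}"
begin

lemma U_measurable [measurable]: "U \<in> borel_measurable M"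
  using indep_coordinates by (rule random_variable_indep_coordinates)

lemma sets_law [measurable_cong, simp]: "sets law = sets borel"
  using distr_coordinate[of undefined] by auto

lemma prob_space_law: "prob_space law"
  using distr_coordinate[of undefined] prob_space_distr[of "\<lambda>\<omega>. U \<omega> $ undefined" borel] by simp

definition weight :: "real^'k^'d \<Rightarrow> real" where
  "weight G = prob {\<omega> \<in> space M. Gamma \<omega> = G}"

lemma prob_Gamma_eq_and_U:
  "T \<in> sets borel \<Longrightarrow>
    prob {\<omega> \<in> space M. Gamma \<omega> = G \<and> U \<omega> \<in> T} = weight G * prob {\<omega> \<in> space M. U \<omega> \<in> T}"
  using indep_Gamma_U[of "{G}" T] by (simp add: weight_def)

lemma prob_eq_sum_weight:
  assumes T: "\<And>G. categorical_matrix G \<Longrightarrow> T G \<in> sets borel"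
  shows "prob {\<omega> \<in> space M. U \<omega> \<in> T (Gamma \<omega>)} =
    (\<Sum>G | categorical_matrix G. weight G * prob {\<omega> \<in> space M. U \<omega> \<in> T G})"
proof -
  define E where "E G = {\<omega> \<in> space M. Gamma \<omega> = G \<and> U \<omega> \<in> T G}" for G
  have "{\<omega> \<in> space M. U \<omega> \<in> T (Gamma \<omega>)} = (\<Union>G \<in> {G. categorical_matrix G}. E G)"
    using categorical by (auto simp: E_def)
  also have "prob \<dots> = (\<Sum>G | categorical_matrix G. prob (E G))"
  proof (rule finite_measure_finite_Union[OF finite_categorical_matrices])
    show "E ` {G. categorical_matrix G} \<subseteq> events"
      using T by (auto simp: E_def)
    show "disjoint_family_on E {G. categorical_matrix G}"
      by (auto simp: disjoint_family_on_def E_def)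
  qed
  also have "\<dots> = (\<Sum>G | categorical_matrix G. weight G * prob {\<omega> \<in> space M. U \<omega> \<in> T G})"
    using T by (intro sum.cong refl) (simp add: E_def prob_Gamma_eq_and_U)
  finally show ?thesis .
qed

lemma sum_weight: "(\<Sum>G | categorical_matrix G. weight G) = 1"
  using prob_eq_sum_weight[of "\<lambda>_. UNIV"] by (simp add: prob_space)

lemma prob_coordinate: "B \<in> sets borel \<Longrightarrow> prob {\<omega> \<in> space M. U \<omega> $ j \<in> B} = measure law B"
  using distr_coordinate[of j] by (auto simp: measure_distr vimage_def Int_def conj_commute)

lemma distr_mult_vec_nth: "distr M borel (\<lambda>\<omega>. (Gamma \<omega> *v U \<omega>) $ i) = law"
proof (rule measure_eqI)
  interpret law: prob_space law by (rule prob_space_law)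
  fix B assume "B \<in> sets (distr M borel (\<lambda>\<omega>. (Gamma \<omega> *v U \<omega>) $ i))"
  then have B[measurable]: "B \<in> sets borel" by simp
  have "prob {\<omega> \<in> space M. (Gamma \<omega> *v U \<omega>) $ i \<in> B} =
      prob {\<omega> \<in> space M. U \<omega> \<in> {u. u $ categorical_column (Gamma \<omega>) i \<in> B}}"
    using categorical by (intro arg_cong[where f=prob]) (auto simp: categorical_matrix_mult_vec_nth)
  also have "\<dots> = (\<Sum>G | categorical_matrix G.
      weight G * prob {\<omega> \<in> space M. U \<omega> $ categorical_column G i \<in> B})"
    by (subst prob_eq_sum_weight) simp_all
  also have "\<dots> = measure law B"
    by (simp add: prob_coordinate flip: sum_distrib_right) (simp add: sum_weight)
  finally show "emeasure (distr M borel (\<lambda>\<omega>. (Gamma \<omega> *v U \<omega>) $ i)) B = emeasure law B"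
    by (simp add: emeasure_distr emeasure_eq_measure law.emeasure_eq_measure vimage_def Int_def conj_commute)
qed simp

text \<open>\<open>cond_given_Gamma A i G x\<close> is \<open>P(X \<in> A | \<Gamma> = G, X\<^sub>i = x)\<close> and \<open>regression A i x\<close> is
  \<open>P(X \<in> A | X\<^sub>i = x)\<close>, where \<open>X = \<Gamma> U\<close>.\<close>

definition cond_given_Gamma :: "(real^'d) set \<Rightarrow> 'd \<Rightarrow> real^'k^'d \<Rightarrow> real \<Rightarrow> real" where
  "cond_given_Gamma A i G x = prob {\<omega> \<in> space M. G *v vec_upd (U \<omega>) (categorical_column G i) x \<in> A}"

definition regression :: "(real^'d) set \<Rightarrow> 'd \<Rightarrow> real \<Rightarrow> real" where
  "regression A i x = (\<Sum>G | categorical_matrix G. weight G * cond_given_Gamma A i G x)"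

lemma mono_cond_given_Gamma:
  assumes A: "A \<in> sets borel" "increasing_set A" and G: "categorical_matrix G"
  shows "mono (cond_given_Gamma A i G)"
proof (rule monoI)
  fix x y :: real assume "x \<le> y"
  define c where "c = categorical_column G i"
  have "G *v vec_upd u c y \<in> A" if "G *v vec_upd u c x \<in> A" for u
  proof -
    have "\<forall>j. (G *v vec_upd u c x) $ j \<le> (G *v vec_upd u c y) $ j"
      using G \<open>x \<le> y\<close> by (intro allI categorical_matrix_mult_vec_mono) simp_all
    with that A(2) show ?thesis
      unfolding increasing_set_def by blast
  qed
  moreover have "{\<omega> \<in> space M. G *v vec_upd (U \<omega>) c y \<in> A} \<in> events"
    using A(1) by measurable
  ultimately show "cond_given_Gamma A i G x \<le> cond_given_Gamma A i G y"
    unfolding cond_given_Gamma_def c_def[symmetric]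
    by (intro finite_measure_mono) auto
qed

lemma borel_measurable_cond_given_Gamma:
  assumes "A \<in> sets borel" "increasing_set A" and "categorical_matrix G"
  shows "cond_given_Gamma A i G \<in> borel_measurable borel"
  by (rule borel_measurable_mono[OF mono_cond_given_Gamma[OF assms]])

lemma mono_regression:
  assumes "A \<in> sets borel" "increasing_set A"
  shows "mono (regression A i)"
proof (rule monoI)
  fix x y :: real assume "x \<le> y"
  then show "regression A i x \<le> regression A i y"
    unfolding regression_def
    by (intro sum_mono mult_left_mono monoD[OF mono_cond_given_Gamma[OF assms]])
      (simp_all add: weight_def)
qed

lemma regression_bounds: "0 \<le> regression A i x" "regression A i x \<le> 1"
proof -
  show "0 \<le> regression A i x"
    by (simp add: regression_def weight_def cond_given_Gamma_def sum_nonneg)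
  have "regression A i x \<le> (\<Sum>G | categorical_matrix G. weight G * 1)"
    unfolding regression_def
    by (intro sum_mono mult_left_mono) (simp_all add: cond_given_Gamma_def weight_def)
  then show "regression A i x \<le> 1"
    by (simp add: sum_weight)
qed

lemma prob_mult_vec_eq_integral:
  assumes A: "A \<in> sets borel" "increasing_set A" and G: "categorical_matrix G"
    and B: "B \<in> sets borel"
  shows "prob {\<omega> \<in> space M. G *v U \<omega> \<in> A \<and> (G *v U \<omega>) $ i \<in> B} =
    (\<integral>x. indicator B x * cond_given_Gamma A i G x \<partial>law)"
proof -
  define c where "c = categorical_column G i"
  have "emeasure M {\<omega> \<in> space M. G *v U \<omega> \<in> A \<and> (G *v U \<omega>) $ i \<in> B} =
      emeasure M {\<omega> \<in> space M. U \<omega> \<in> {u. G *v u \<in> A} \<and> U \<omega> $ c \<in> B}"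
    using G by (simp add: categorical_matrix_mult_vec_nth c_def)
  also have "\<dots> = (\<integral>\<^sup>+x. indicator B x *
      emeasure M {\<omega> \<in> space M. vec_upd (U \<omega>) c x \<in> {u. G *v u \<in> A}} \<partial>law)"
    using A(1) B by (subst emeasure_indep_coordinates[OF indep_coordinates]) (simp_all add: distr_coordinate)
  also have "\<dots> = (\<integral>\<^sup>+x. ennreal (indicator B x * cond_given_Gamma A i G x) \<partial>law)"
    by (intro nn_integral_cong)
      (simp add: cond_given_Gamma_def c_def emeasure_eq_measure indicator_def)
  finally have "prob {\<omega> \<in> space M. G *v U \<omega> \<in> A \<and> (G *v U \<omega>) $ i \<in> B} =
      enn2real (\<integral>\<^sup>+x. ennreal (indicator B x * cond_given_Gamma A i G x) \<partial>law)"
    by (simp add: measure_def)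
  also have "\<dots> = (\<integral>x. indicator B x * cond_given_Gamma A i G x \<partial>law)"
  proof (rule enn2real_nn_integral_eq_integral)
    show "(\<lambda>x. indicator B x * cond_given_Gamma A i G x) \<in> borel_measurable law"
      using B borel_measurable_cond_given_Gamma[OF A G] by measurable
  qed (simp_all add: cond_given_Gamma_def)
  finally show ?thesis .
qed

lemma prob_eq_integral_regression:
  assumes A: "A \<in> sets borel" "increasing_set A" and B: "B \<in> sets borel"
  shows "prob {\<omega> \<in> space M. Gamma \<omega> *v U \<omega> \<in> A \<and> (Gamma \<omega> *v U \<omega>) $ i \<in> B} =
    (\<integral>x. indicator B x * regression A i x \<partial>law)"
proof -
  interpret law: prob_space law by (rule prob_space_law)
  have integrable: "integrable law (\<lambda>x. indicator B x * cond_given_Gamma A i G x)"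
    if "categorical_matrix G" for G
  proof (rule law.integrable_const_bound[where B=1])
    show "(\<lambda>x. indicator B x * cond_given_Gamma A i G x) \<in> borel_measurable law"
      using B borel_measurable_cond_given_Gamma[OF A that] by measurable
  qed (simp add: cond_given_Gamma_def indicator_def)
  have "prob {\<omega> \<in> space M. Gamma \<omega> *v U \<omega> \<in> A \<and> (Gamma \<omega> *v U \<omega>) $ i \<in> B} =
      (\<Sum>G | categorical_matrix G.
        weight G * prob {\<omega> \<in> space M. G *v U \<omega> \<in> A \<and> (G *v U \<omega>) $ i \<in> B})"
    using A(1) B prob_eq_sum_weight[of "\<lambda>G. {u. G *v u \<in> A \<and> (G *v u) $ i \<in> B}"] by simp
  also have "\<dots> = (\<Sum>G | categorical_matrix G.
      weight G * (\<integral>x. indicator B x * cond_given_Gamma A i G x \<partial>law))"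
    using A B by (intro sum.cong refl) (simp add: prob_mult_vec_eq_integral)
  also have "\<dots> = (\<integral>x. (\<Sum>G | categorical_matrix G.
      weight G * (indicator B x * cond_given_Gamma A i G x)) \<partial>law)"
    using integrable by (simp add: integral_sum)
  also have "\<dots> = (\<integral>x. indicator B x * regression A i x \<partial>law)"
    by (simp add: regression_def sum_distrib_left mult.left_commute)
  finally show ?thesis .
qed

lemma PRD_mult_vec: "PRD M (\<lambda>\<omega>. Gamma \<omega> *v U \<omega>)"
  unfolding PRD_def
proof (intro allI ballI impI)
  fix i :: 'd and A :: "(real^'d) set"
  assume "A \<in> sets borel" "increasing_set A"
  then show "\<exists>g. mono g \<and> g \<in> borel_measurable borel \<and> (\<forall>x. 0 \<le> g x \<and> g x \<le> 1) \<and>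
      (\<forall>B \<in> sets borel.
        prob {\<omega> \<in> space M. Gamma \<omega> *v U \<omega> \<in> A \<and> (Gamma \<omega> *v U \<omega>) $ i \<in> B} =
        (\<integral>x. indicator B x * g x \<partial>distr M borel (\<lambda>\<omega>. (Gamma \<omega> *v U \<omega>) $ i)))"
    by (intro exI[of _ "regression A i"])
      (simp add: mono_regression borel_measurable_mono regression_bounds
        prob_eq_integral_regression distr_mult_vec_nth)
qed

end

theorem proposition9:
  fixes M :: "'a measure"
    and Gamma :: "'a \<Rightarrow> real^'k^'d"
    and U :: "'a \<Rightarrow> real^'k"
  assumes "prob_space M"
    and "Gamma \<in> borel_measurable M"
    and "\<forall>\<omega>\<in>space M. categorical_matrix (Gamma \<omega>)"
    and "U \<in> borel_measurable M"
    and "prob_space.indep_vars M (\<lambda>_. borel) (\<lambda>j \<omega>. U \<omega> $ j) UNIV"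
    and "\<forall>j. distr M borel (\<lambda>\<omega>. U \<omega> $ j) = uniform_measure lborel {0..1}"
    and "\<forall>S \<in> sets borel. \<forall>T \<in> sets borel.
       measure M {\<omega> \<in> space M. Gamma \<omega> \<in> S \<and> U \<omega> \<in> T} =
       measure M {\<omega> \<in> space M. Gamma \<omega> \<in> S} * measure M {\<omega> \<in> space M. U \<omega> \<in> T}"
  shows "PRD M (\<lambda>\<omega>. Gamma \<omega> *v U \<omega>)"
proof -
  interpret categorical_model M Gamma U "uniform_measure lborel {0..1}"
    using assms unfolding categorical_model_def categorical_model_axioms_def by blast
  show ?thesis
    by (rule PRD_mult_vec)
qed

end
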